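(* Let $I\subseteq\mathbb{R}_+$ be a nonempty, non-singleton interval, let $n\in\mathbb{N}$, and let $\Phi: I\to\mathbb{R}_+$ be subadditive of order $n$. Then the function $t\mapsto \frac{\Phi(t)}{t^n}$ is subadditive on $I\cap\,]0,\infty[$, i.e. $\frac{\Phi(x+y)}{(x+y)^n}\leq\frac{\Phi(x)}{x^n}+\frac{\Phi(y)}{y^n}$ for all $x,y\in I\cap\,]0,\infty[$ with $x+y\in I$.
   Context: $\mathbb{R}_+$ denotes the set of nonnegative real numbers. For $n\in\mathbb{N}$, a function $\Phi: I\to\mathbb{R}_+$ is called subadditive of order $n$ if for all $x,y\in I$ with $y>0$ and $x+y\in I$ one has $\Phi(x+y)\leq \Phi(x)+\frac{(x+y)^n-x^n}{y^n}\Phi(y)$. *)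

theory Defs
  imports "HOL-Analysis.Analysis"
begin

definition subadditive_of_order :: "nat \<Rightarrow> real set \<Rightarrow> (real \<Rightarrow> real) \<Rightarrow> bool" where
  "subadditive_of_order n I \<Phi> \<longleftrightarrow>
     (\<forall>x\<in>I. \<Phi> x \<ge> 0) \<and>
     (\<forall>x\<in>I. \<forall>y\<in>I. y > 0 \<longrightarrow> x + y \<in> I \<longrightarrow>
        \<Phi> (x + y) \<le> \<Phi> x + ((x + y) ^ n - x ^ n) / y ^ n * \<Phi> y)"

end

(* Divide the defining inequality by (x + y)^n: the coefficient of \<Phi> y / y^n becomes
   1 - x^n / (x + y)^n \<le> 1, and \<Phi> x / (x + y)^n \<le> \<Phi> x / x^n. *)

theory Submission
  imports Defs
begin

lemma divide_le_add_divide_of_weighted_bound: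
  fixes a b s u v w :: real
  assumes "0 < a" "a \<le> s" "0 < b" "0 \<le> u" "0 \<le> v"
    and "w \<le> u + (s - a) / b * v"
  shows "w / s \<le> u / a + v / b"
proof -
  have s: "0 < s" using assms(1,2) by linarith
  have "w / s \<le> (u + (s - a) / b * v) / s"
    using assms(6) s by (simp add: divide_right_mono)
  also have "\<dots> = u / s + (s - a) / s * (v / b)"
    using s assms(3) by (simp add: field_simps)
  also have "u / s \<le> u / a"
    using assms(1,2,4) by (simp add: frac_le)
  also have "(s - a) / s * (v / b) \<le> 1 * (v / b)"
    using assms(1,3,5) s by (intro mult_right_mono) auto
  finally show ?thesis by simp
qed

lemma subadditive_of_order_divide_power:
  assumes "subadditive_of_order n I \<Phi>"
    and "x \<in> I" "y \<in> I" "x + y \<in> I" "0 < x" "0 < y"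
  shows "\<Phi> (x + y) / (x + y) ^ n \<le> \<Phi> x / x ^ n + \<Phi> y / y ^ n"
proof (rule divide_le_add_divide_of_weighted_bound)
  show "x ^ n \<le> (x + y) ^ n"
    using assms(5,6) by (intro power_mono) auto
  show "\<Phi> (x + y) \<le> \<Phi> x + ((x + y) ^ n - x ^ n) / y ^ n * \<Phi> y"
    using assms unfolding subadditive_of_order_def by blast
  show "0 \<le> \<Phi> x" "0 \<le> \<Phi> y"
    using assms(1-3) unfolding subadditive_of_order_def by auto
qed (use assms(5,6) in auto)

theorem theorem2p4:
  fixes I :: "real set" and n :: nat and \<Phi> :: "real \<Rightarrow> real"
  assumes "is_interval I" and "I \<subseteq> {0..}"
    and "\<exists>a\<in>I. \<exists>b\<in>I. a \<noteq> b"
    and "subadditive_of_order n I \<Phi>"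
  shows "\<forall>x\<in>I \<inter> {0<..}. \<forall>y\<in>I \<inter> {0<..}. x + y \<in> I \<longrightarrow>
           \<Phi> (x + y) / (x + y) ^ n \<le> \<Phi> x / x ^ n + \<Phi> y / y ^ n"
  using subadditive_of_order_divide_power[OF assms(4)] by auto

end
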